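(* For every $1\le j\le d$, $k\ge1$, $\hat x\neq\hat y\in\mathbb Z^d$ and $\eta\in\Omega$, $$c^{(k),j}_{\hat x,\hat y}(\eta)\,[\eta(\hat y)-\eta(\hat x)]=P^{(k),j}(\tau^{\hat y}\eta)-P^{(k),j}(\tau^{\hat x}\eta)-\nabla_jA^{(k),j}_{\hat x,\hat y}(\eta),$$ where $P^{(k),j}(\eta)=\frac12\prod_{i=0}^{k-1}\eta(i\hat e_j)+\frac12\prod_{i=0}^{k-1}\eta(-i\hat e_j)$, $A^{(k),j}_{\hat x,\hat y}=M^{(k),j}_{\hat x,\hat y}-M^{(k),j}_{\hat y,\hat x}$ and $M^{(k),j}_{\hat x,\hat y}(\eta)=\frac12\sum_{\ell=1}^{k-1}\prod_{i_0=1}^{\ell}\eta(\hat x-i_0\hat e_j)\prod_{i_1=0}^{k-1-\ell}\eta(\hat y+i_1\hat e_j)$.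
   Context: $\Omega=\{0,\dots,N_{\mathrm e}\}^{\mathbb Z^d}$, $\{\hat e_1,\dots,\hat e_d\}$ the canonical basis. $\tau^{\hat z}\eta(\hat w)=\eta(\hat w+\hat z)$, $\tau_j\eta(\hat w)=\eta(\hat w+\hat e_j)$, and for $A:\Omega\to\mathbb R$, $\nabla_jA(\eta)=A(\tau_j\eta)-A(\eta)$. For $k\ge1$: $r^{(k),j}_{\hat x,\hat y}(\eta)=\sum_{\ell=1}^k\prod_{i=1}^{k-\ell}\eta(\hat x-i\hat e_j)\prod_{m=1}^{\ell-1}\eta(\hat y+m\hat e_j)$ (empty products equal $1$), and $c^{(k),j}_{\hat x,\hat y}=\frac12\big(r^{(k),j}_{\hat x,\hat y}+r^{(k),j}_{\hat y,\hat x}\big)$. Empty sums equal $0$. *)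

theory Defs
  imports Complex_Main
begin

(* Sites of Z^d are functions 'd \<Rightarrow> int with 'd a finite index type (d = CARD('d));
   configurations eta : Z^d \<Rightarrow> nat, in Omega when bounded by N_e. *)

type_synonym 'd site = "'d \<Rightarrow> int"
type_synonym 'd config = "'d site \<Rightarrow> nat"

definition Omega :: "nat \<Rightarrow> ('d::finite) config set" where
  "Omega Ne = {eta. \<forall>w. eta w \<le> Ne}"

definition ebas :: "'d::finite \<Rightarrow> 'd site" where
  "ebas j = (\<lambda>i. if i = j then 1 else 0)"

definition mv :: "'d::finite site \<Rightarrow> int \<Rightarrow> 'd \<Rightarrow> 'd site" where
  "mv x n j = (\<lambda>i. x i + n * ebas j i)"

definition shift :: "'d::finite site \<Rightarrow> 'd config \<Rightarrow> 'd config" where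
  "shift z eta = (\<lambda>w. eta (\<lambda>i. w i + z i))"

definition tauj :: "'d::finite \<Rightarrow> 'd config \<Rightarrow> 'd config" where
  "tauj j eta = shift (ebas j) eta"

definition nablaj :: "'d::finite \<Rightarrow> ('d config \<Rightarrow> real) \<Rightarrow> 'd config \<Rightarrow> real" where
  "nablaj j A eta = A (tauj j eta) - A eta"

definition rate :: "nat \<Rightarrow> 'd::finite \<Rightarrow> 'd site \<Rightarrow> 'd site \<Rightarrow> 'd config \<Rightarrow> real" where
  "rate k j x y eta = (\<Sum>l = 1..k. (\<Prod>i = 1..k - l. real (eta (mv x (- int i) j)))
                                   * (\<Prod>m = 1..l - 1. real (eta (mv y (int m) j))))"

definition crate :: "nat \<Rightarrow> 'd::finite \<Rightarrow> 'd site \<Rightarrow> 'd site \<Rightarrow> 'd config \<Rightarrow> real" where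
  "crate k j x y eta = (rate k j x y eta + rate k j y x eta) / 2"

definition Pk :: "nat \<Rightarrow> 'd::finite \<Rightarrow> 'd config \<Rightarrow> real" where
  "Pk k j eta = (\<Prod>i = 0..<k. real (eta (mv (\<lambda>_. 0) (int i) j))) / 2
              + (\<Prod>i = 0..<k. real (eta (mv (\<lambda>_. 0) (- int i) j))) / 2"

definition Mk :: "nat \<Rightarrow> 'd::finite \<Rightarrow> 'd site \<Rightarrow> 'd site \<Rightarrow> 'd config \<Rightarrow> real" where
  "Mk k j x y eta = (\<Sum>l = 1..k - 1. (\<Prod>i0 = 1..l. real (eta (mv x (- int i0) j)))
                                     * (\<Prod>i1 = 0..k - 1 - l. real (eta (mv y (int i1) j)))) / 2"

definition Ak :: "nat \<Rightarrow> 'd::finite \<Rightarrow> 'd site \<Rightarrow> 'd site \<Rightarrow> 'd config \<Rightarrow> real" where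
  "Ak k j x y eta = Mk k j x y eta - Mk k j y x eta"

end

theory Submission
  imports Defs
begin

text \<open>Everything happens on the two lines through x and y in direction e_j, read as
  X t = eta(x + t e_j) and Y t = eta(y + t e_j). Each summand of the rate r^(n+1) is a window
  product of n consecutive occupations, of X to the left of the origin and of Y to the right.
  Multiplying the rate by Y 0 or by X 0 extends every window by one site at the origin; the
  two resulting sums differ only by their extreme windows, which give the products in P, and by
  a shift of the line by one site, which gives the discrete gradient of M.\<close>

definition window_prod :: "(int \<Rightarrow> real) \<Rightarrow> (int \<Rightarrow> real) \<Rightarrow> nat \<Rightarrow> nat \<Rightarrow> real" where
  "window_prod X Y a b = (\<Prod>i=1..a. X (- int i)) * (\<Prod>m=1..b. Y (int m))"

definition line_rate :: "nat \<Rightarrow> (int \<Rightarrow> real) \<Rightarrow> (int \<Rightarrow> real) \<Rightarrow> real" where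
  "line_rate n X Y = (\<Sum>p=0..n. window_prod X Y (n - p) p)"

definition line_M :: "nat \<Rightarrow> (int \<Rightarrow> real) \<Rightarrow> (int \<Rightarrow> real) \<Rightarrow> real" where
  "line_M n X Y = (\<Sum>l=1..n. (\<Prod>i=1..l. X (- int i)) * (\<Prod>i=0..n-l. Y (int i)))"

lemma prod_atLeast0_atMost_split: "(\<Prod>i=0..n. f i) = f 0 * (\<Prod>i=1..n. f i)"
  for f :: "nat \<Rightarrow> 'a::comm_monoid_mult"
  by (simp add: prod.atLeast_Suc_atMost)

lemma prod_shift_down: "(\<Prod>i=1..Suc n. f (i - 1)) = (\<Prod>i=0..n. f i)"
  for f :: "nat \<Rightarrow> 'a::comm_monoid_mult"
  using prod.shift_bounds_cl_Suc_ivl[of "\<lambda>i. f (i - 1)" 0 n] by simp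

lemma line_M_eq_window_sum:
  "line_M n X Y = Y 0 * (\<Sum>p<n. window_prod X Y (n - p) p)"
proof -
  have "line_M n X Y = (\<Sum>l=1..n. Y 0 * window_prod X Y l (n - l))"
    unfolding line_M_def window_prod_def
    by (intro sum.cong refl) (simp add: prod_atLeast0_atMost_split mult_ac)
  also have "\<dots> = (\<Sum>p<n. Y 0 * window_prod X Y (n - p) p)"
    by (rule sum.reindex_bij_witness[where i="\<lambda>p. n - p" and j="\<lambda>l. n - l"]) auto
  finally show ?thesis by (simp add: sum_distrib_left)
qed

lemma line_M_shift_eq_window_sum:
  "line_M n (\<lambda>t. X (t + 1)) (\<lambda>t. Y (t + 1)) = X 0 * (\<Sum>p=1..n. window_prod X Y (n - p) p)"
proof -
  have shift_X: "(\<Prod>i=1..Suc q. X (- int i + 1)) = X 0 * (\<Prod>i=1..q. X (- int i))" for q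
    using prod_shift_down[of "\<lambda>i. X (- int i)" q]
    by (simp add: prod_atLeast0_atMost_split of_nat_diff algebra_simps)
  have shift_Y: "(\<Prod>i=0..q. Y (int i + 1)) = (\<Prod>m=1..Suc q. Y (int m))" for q
    using prod.shift_bounds_cl_Suc_ivl[of "\<lambda>m. Y (int m)" 0 q] by (simp add: add.commute)
  have "line_M n (\<lambda>t. X (t + 1)) (\<lambda>t. Y (t + 1))
      = (\<Sum>l=1..n. X 0 * window_prod X Y (l - 1) (Suc (n - l)))"
    unfolding line_M_def
  proof (intro sum.cong refl)
    fix l assume "l \<in> {1..n}"
    then obtain q where l: "l = Suc q" by (cases l) auto
    show "(\<Prod>i=1..l. X (- int i + 1)) * (\<Prod>i=0..n - l. Y (int i + 1))
        = X 0 * window_prod X Y (l - 1) (Suc (n - l))"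
      unfolding l by (simp only: shift_X shift_Y) (simp add: window_prod_def)
  qed
  also have "\<dots> = (\<Sum>p=1..n. X 0 * window_prod X Y (n - p) p)"
    by (rule sum.reindex_bij_witness[where i="\<lambda>p. Suc n - p" and j="\<lambda>l. Suc n - l"])
      (auto simp: Suc_diff_le)
  finally show ?thesis by (simp add: sum_distrib_left)
qed

lemma line_rate_telescope:
  "line_rate n X Y * (Y 0 - X 0)
     = (\<Prod>m=0..n. Y (int m)) - (\<Prod>i=0..n. X (- int i))
       + line_M n X Y - line_M n (\<lambda>t. X (t + 1)) (\<lambda>t. Y (t + 1))"
proof -
  have "line_rate n X Y * Y 0
      = Y 0 * window_prod X Y 0 n + Y 0 * (\<Sum>p<n. window_prod X Y (n - p) p)"
    by (simp add: line_rate_def atLeast0AtMost lessThan_Suc_atMost[symmetric] algebra_simps)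
  also have "\<dots> = (\<Prod>m=0..n. Y (int m)) + line_M n X Y"
    by (simp add: line_M_eq_window_sum window_prod_def prod_atLeast0_atMost_split)
  finally have right: "line_rate n X Y * Y 0 = (\<Prod>m=0..n. Y (int m)) + line_M n X Y" .
  have "line_rate n X Y * X 0
      = X 0 * window_prod X Y n 0 + X 0 * (\<Sum>p=1..n. window_prod X Y (n - p) p)"
    by (simp add: line_rate_def sum.atLeast_Suc_atMost algebra_simps)
  also have "\<dots> = (\<Prod>i=0..n. X (- int i)) + line_M n (\<lambda>t. X (t + 1)) (\<lambda>t. Y (t + 1))"
    by (simp add: line_M_shift_eq_window_sum window_prod_def prod_atLeast0_atMost_split)
  finally have left: "line_rate n X Y * X 0
      = (\<Prod>i=0..n. X (- int i)) + line_M n (\<lambda>t. X (t + 1)) (\<lambda>t. Y (t + 1))" .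
  show ?thesis
    using right left by (simp add: right_diff_distrib)
qed

lemma shift_mv: "shift y eta (mv (\<lambda>_. 0) n j) = eta (mv y n j)"
  unfolding shift_def mv_def by (simp add: add.commute)

lemma tauj_mv: "tauj j eta (mv x n j) = eta (mv x (n + 1) j)"
  unfolding tauj_def shift_def mv_def by (rule arg_cong[where f=eta]) (auto simp: ebas_def)

lemma mv_0: "mv x 0 j = x"
  unfolding mv_def by simp

lemma rate_Suc_eq_line_rate:
  "rate (Suc n) j x y eta = line_rate n (\<lambda>t. real (eta (mv x t j))) (\<lambda>t. real (eta (mv y t j)))"
  unfolding rate_def line_rate_def window_prod_def
  using sum.shift_bounds_cl_Suc_ivl[of "\<lambda>l. (\<Prod>i=1..Suc n - l. real (eta (mv x (- int i) j)))
      * (\<Prod>m=1..l - 1. real (eta (mv y (int m) j)))" 0 n]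
  by simp

lemma Mk_Suc_eq_line_M:
  "Mk (Suc n) j x y eta = line_M n (\<lambda>t. real (eta (mv x t j))) (\<lambda>t. real (eta (mv y t j))) / 2"
  unfolding Mk_def line_M_def by simp

lemma Mk_Suc_tauj_eq_line_M:
  "Mk (Suc n) j x y (tauj j eta)
     = line_M n (\<lambda>t. real (eta (mv x (t + 1) j))) (\<lambda>t. real (eta (mv y (t + 1) j))) / 2"
  unfolding Mk_def line_M_def by (simp add: tauj_mv)

lemma Pk_Suc_shift:
  "Pk (Suc n) j (shift y eta)
     = (\<Prod>m=0..n. real (eta (mv y (int m) j))) / 2 + (\<Prod>m=0..n. real (eta (mv y (- int m) j))) / 2"
  unfolding Pk_def shift_mv by (simp add: atLeastLessThanSuc_atLeastAtMost)

theorem mainTheorem3: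
  fixes Ne k :: nat and j :: "'d::finite" and x y :: "'d site" and eta :: "'d config"
  assumes "k \<ge> 1" and "x \<noteq> y" and "eta \<in> Omega Ne"
  shows "crate k j x y eta * (real (eta y) - real (eta x))
         = Pk k j (shift y eta) - Pk k j (shift x eta) - nablaj j (Ak k j x y) eta"
proof -
  obtain n where k: "k = Suc n" using assms(1) by (cases k) auto
  define X where "X t = real (eta (mv x t j))" for t
  define Y where "Y t = real (eta (mv y t j))" for t
  have "X 0 = real (eta x)" and "Y 0 = real (eta y)"
    by (simp_all add: X_def Y_def mv_0)
  moreover note line_rate_telescope[of n X Y] line_rate_telescope[of n Y X]
  ultimately show ?thesis
    unfolding k nablaj_def Ak_def crate_def rate_Suc_eq_line_rate Mk_Suc_tauj_eq_line_M
    unfolding Mk_Suc_eq_line_M Pk_Suc_shift X_def[symmetric] Y_def[symmetric]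
    by (simp add: field_simps)
qed

end
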